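(* Consider the job set $J$ described in the context, with $p_\ell$ sufficiently large. Let $\sigma=(M_1,M_2)$ be a schedule of $J$ with $\omega_1(\sigma)=0$ and $\ell\in M_1$. Then $\sigma$ can be improved (its makespan strictly decreased) by the 3-swap that interchanges $a_1$ with $b_1,c_1$, making $\omega_1=1$.
   Context: Two identical machines; a schedule $\sigma=(M_1,M_2)$ partitions the jobs into sets processed on machines 1 and 2, with loads $L_i=\sum_{j\in M_i}p_j$ and makespan $\max_iL_i$. Fix $n\ge1$ and the job set $J=\{a_i,b_i,c_i:1\le i\le n\}\cup\{\ell\}$ with $p_{a_i}=2^{n+i+1}+2^{i-1}$, $p_{b_i}=2^{n+i}$, $p_{c_i}=2^{n+i-1}+2^{i-1}$, and $p_\ell$ a sufficiently large number. For each $i$ define $\omega_i(\sigma)=0$ if $a_i\in M_1$ and $b_i,c_i\in M_2$; $\omega_i(\sigma)=1$ if $a_i\in M_2$ and $b_i,c_i\in M_1$; and $\omega_i(\sigma)=-1$ otherwise. A 3-swap interchanges the machine assignments of exactly three jobs (some on each machine); it improves $\sigma$ if the makespan strictly decreases. *)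

theory Defs
  imports Main
begin

datatype job = A nat | B nat | C nat | Ell

definition jobs :: "nat \<Rightarrow> job set" where
  "jobs n = {A i | i. 1 \<le> i \<and> i \<le> n} \<union> {B i | i. 1 \<le> i \<and> i \<le> n}
            \<union> {C i | i. 1 \<le> i \<and> i \<le> n} \<union> {Ell}"

fun ptime :: "nat \<Rightarrow> nat \<Rightarrow> job \<Rightarrow> nat" where
  "ptime n pl (A i) = 2 ^ (n + i + 1) + 2 ^ (i - 1)"
| "ptime n pl (B i) = 2 ^ (n + i)"
| "ptime n pl (C i) = 2 ^ (n + i - 1) + 2 ^ (i - 1)"
| "ptime n pl Ell = pl"

definition is_schedule :: "nat \<Rightarrow> job set \<Rightarrow> job set \<Rightarrow> bool" where
  "is_schedule n M1 M2 \<longleftrightarrow> M1 \<union> M2 = jobs n \<and> M1 \<inter> M2 = {}"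

definition load :: "nat \<Rightarrow> nat \<Rightarrow> job set \<Rightarrow> nat" where
  "load n pl M = (\<Sum>j\<in>M. ptime n pl j)"

definition makespan :: "nat \<Rightarrow> nat \<Rightarrow> job set \<Rightarrow> job set \<Rightarrow> nat" where
  "makespan n pl M1 M2 = max (load n pl M1) (load n pl M2)"

definition omega :: "nat \<Rightarrow> job set \<Rightarrow> job set \<Rightarrow> int" where
  "omega i M1 M2 =
     (if A i \<in> M1 \<and> B i \<in> M2 \<and> C i \<in> M2 then 0
      else if A i \<in> M2 \<and> B i \<in> M1 \<and> C i \<in> M1 then 1
      else -1)"

definition swap :: "job set \<Rightarrow> job set \<Rightarrow> job set \<Rightarrow> job set \<times> job set" where
  "swap S M1 M2 = ((M1 - S) \<union> (M2 \<inter> S), (M2 - S) \<union> (M1 \<inter> S))"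

definition is_3swap :: "job set \<Rightarrow> job set \<Rightarrow> job set \<Rightarrow> bool" where
  "is_3swap S M1 M2 \<longleftrightarrow> card S = 3 \<and> S \<subseteq> M1 \<union> M2 \<and> S \<inter> M1 \<noteq> {} \<and> S \<inter> M2 \<noteq> {}"

definition improves :: "nat \<Rightarrow> nat \<Rightarrow> job set \<Rightarrow> job set \<Rightarrow> job set \<Rightarrow> bool" where
  "improves n pl S M1 M2 \<longleftrightarrow> is_3swap S M1 M2 \<and>
     makespan n pl (fst (swap S M1 M2)) (snd (swap S M1 M2)) < makespan n pl M1 M2"

end

theory Submission
  imports Defs
begin

text \<open>With \<open>\<ell>\<close> on \<open>M\<^sub>1\<close> and \<open>p\<^sub>\<ell>\<close> larger than the total length of all other jobs plus \<open>2\<^sup>n\<close>,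
  \<open>M\<^sub>1\<close> is the critical machine and exceeds \<open>M\<^sub>2\<close> by more than \<open>2\<^sup>n\<close>.  Exchanging \<open>a\<^sub>1\<close>
  (length \<open>4\<cdot>2\<^sup>n + 1\<close>) against \<open>b\<^sub>1, c\<^sub>1\<close> (total length \<open>3\<cdot>2\<^sup>n + 1\<close>) shifts exactly \<open>2\<^sup>n\<close> from
  \<open>M\<^sub>1\<close> to \<open>M\<^sub>2\<close>, so both new loads are below the old makespan.\<close>

lemma finite_jobs: "finite (jobs n)"
proof -
  have "jobs n \<subseteq> A ` {1..n} \<union> B ` {1..n} \<union> C ` {1..n} \<union> {Ell}"
    unfolding jobs_def by auto
  then show ?thesis
    by (rule finite_subset) auto
qed

lemma sum_swap_fst:
  assumes "finite M1" "finite M2" "M1 \<inter> M2 = {}"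
  shows "sum f (fst (swap S M1 M2)) + sum f (M1 \<inter> S) = sum f M1 + sum f (M2 \<inter> S)"
proof -
  have "sum f (fst (swap S M1 M2)) = sum f (M1 - S) + sum f (M2 \<inter> S)"
    unfolding swap_def fst_conv using assms by (intro sum.union_disjoint) auto
  moreover have "sum f M1 = sum f (M1 - S) + sum f (M1 \<inter> S)"
    using sum.Int_Diff[OF assms(1)] by (simp add: add.commute)
  ultimately show ?thesis
    by (simp add: ac_simps)
qed

lemma snd_swap: "snd (swap S M1 M2) = fst (swap S M2 M1)"
  by (simp add: swap_def)

lemma sum_swap_snd:
  assumes "finite M1" "finite M2" "M1 \<inter> M2 = {}"
  shows "sum f (snd (swap S M1 M2)) + sum f (M2 \<inter> S) = sum f M2 + sum f (M1 \<inter> S)"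
  using sum_swap_fst[of M2 M1 f S] assms by (simp add: snd_swap Int_commute)

lemma load_Ell_notin:
  assumes "Ell \<notin> M"
  shows "load n pl M = load n pl' M"
  unfolding load_def
proof (rule sum.cong)
  show "ptime n pl j = ptime n pl' j" if "j \<in> M" for j
    using assms that by (cases j) auto
qed simp

lemma load_le_short_jobs:
  assumes "M \<subseteq> jobs n" "Ell \<notin> M"
  shows "load n pl M \<le> load n 0 (jobs n - {Ell})"
proof -
  have "load n pl M \<le> load n pl (jobs n - {Ell})"
    unfolding load_def using assms finite_jobs by (intro sum_mono2) auto
  also have "\<dots> = load n 0 (jobs n - {Ell})"
    by (rule load_Ell_notin) simp
  finally show ?thesis .
qed

context
  fixes n pl :: nat and M1 M2 :: "job set"
  assumes schedule: "is_schedule n M1 M2" and omega_0: "omega 1 M1 M2 = 0"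
begin

private lemma finite_machines: "finite M1" "finite M2"
  using schedule finite_jobs unfolding is_schedule_def by (metis finite_Un)+

private lemma disjoint_machines: "M1 \<inter> M2 = {}"
  using schedule by (simp add: is_schedule_def)

private lemma first_triple_on_machines: "A 1 \<in> M1" "B 1 \<in> M2" "C 1 \<in> M2"
  using omega_0 by (auto simp: omega_def split: if_splits)

private lemma first_triple_split:
  "M1 \<inter> {A 1, B 1, C 1} = {A 1}" "M2 \<inter> {A 1, B 1, C 1} = {B 1, C 1}"
  using first_triple_on_machines disjoint_machines by auto

lemma load_swap_first_triple:
  "load n pl (fst (swap {A 1, B 1, C 1} M1 M2)) + 2 ^ n = load n pl M1"
  "load n pl (snd (swap {A 1, B 1, C 1} M1 M2)) = load n pl M2 + 2 ^ n"
  using sum_swap_fst[OF finite_machines disjoint_machines, of "ptime n pl" "{A 1, B 1, C 1}"]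
    sum_swap_snd[OF finite_machines disjoint_machines, of "ptime n pl" "{A 1, B 1, C 1}"]
  unfolding first_triple_split load_def by simp_all

lemma is_3swap_first_triple: "is_3swap {A 1, B 1, C 1} M1 M2"
  using first_triple_on_machines by (auto simp: is_3swap_def)

lemma omega_swap_first_triple:
  "omega 1 (fst (swap {A 1, B 1, C 1} M1 M2)) (snd (swap {A 1, B 1, C 1} M1 M2)) = 1"
  using first_triple_on_machines disjoint_machines by (auto simp: omega_def swap_def)

lemma load_first_machine_gt:
  assumes "Ell \<in> M1"
  shows "pl + 4 * 2 ^ n < load n pl M1"
proof -
  have "load n pl {Ell, A 1} \<le> load n pl M1"
    unfolding load_def using assms first_triple_on_machines finite_machines
    by (intro sum_mono2) auto
  then show ?thesis
    by (simp add: load_def)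
qed

end

theorem lemma7:
  fixes n :: nat
  assumes "n \<ge> 1"
  shows "\<exists>P0. \<forall>pl \<ge> P0. \<forall>M1 M2.
           is_schedule n M1 M2 \<and> omega 1 M1 M2 = 0 \<and> Ell \<in> M1 \<longrightarrow>
             improves n pl {A 1, B 1, C 1} M1 M2 \<and>
             omega 1 (fst (swap {A 1, B 1, C 1} M1 M2)) (snd (swap {A 1, B 1, C 1} M1 M2)) = 1"
proof (intro exI allI impI)
  let ?S = "{A 1, B 1, C 1}"
  fix pl M1 M2
  assume pl: "pl \<ge> load n 0 (jobs n - {Ell}) + 2 ^ n"
    and "is_schedule n M1 M2 \<and> omega 1 M1 M2 = 0 \<and> Ell \<in> M1"
  then have sched: "is_schedule n M1 M2" and omega_0: "omega 1 M1 M2 = 0" and ell: "Ell \<in> M1"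
    by auto
  have "load n pl M2 \<le> load n 0 (jobs n - {Ell})"
    using sched ell by (intro load_le_short_jobs) (auto simp: is_schedule_def)
  with pl load_first_machine_gt[OF sched omega_0 ell, of pl]
  have gap: "load n pl M2 + 2 ^ n < load n pl M1"
    by linarith
  have "(0::nat) < 2 ^ n"
    by simp
  with gap load_swap_first_triple[OF sched omega_0, of pl]
  have "load n pl (fst (swap ?S M1 M2)) < load n pl M1"
    and "load n pl (snd (swap ?S M1 M2)) < load n pl M1"
    by linarith+
  then have "makespan n pl (fst (swap ?S M1 M2)) (snd (swap ?S M1 M2)) < makespan n pl M1 M2"
    by (simp add: makespan_def less_max_iff_disj)
  with is_3swap_first_triple[OF sched omega_0] omega_swap_first_triple[OF sched omega_0]
  show "improves n pl ?S M1 M2 \<and> omega 1 (fst (swap ?S M1 M2)) (snd (swap ?S M1 M2)) = 1"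
    by (simp add: improves_def)
qed

end
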